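(* Assume (A1). Let $\delta>0$ and $\mathcal R=\{r_1,\dots,r_m\}$ with positive integers $r_1<\dots<r_m\le t$. With probability at least $1-\delta$, both of the following hold: (i) for all $k\le m$: $\lVert\bm C(t)-\hat{\bm C}^{[r_k]}(t)\rVert_\infty\le\frac{A_{\delta,n,m}}{\sqrt{r_k}}+\lVert\bm C(t)-\bm C^{[r_k]}(t)\rVert_\infty$; (ii) for all $k\le m-1$: $\lVert\bm C^{[r_k]}(t)-\bm C^{[r_{k+1}]}(t)-\hat{\bm C}^{[r_k]}(t)+\hat{\bm C}^{[r_{k+1}]}(t)\rVert_\infty\le A_{\delta,n,m}\sqrt{\frac{1-r_k/r_{k+1}}{r_k}}$, where $A_{\delta,n,m}=\sqrt{2\ln[(2m-1)n(n-1)/\delta]}$.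
   Context: For matrices $\lVert\bm M\rVert_\infty=\max_{i,j}|M_{ij}|$. Let $\ell_1,\dots,\ell_n:\mathbb{R}^d\to\{-1,1\}$ be functions ($n\ge2$) and $X_1,X_2,\dots$ random inputs with $X_k\sim D_k$. (A1): for every finite $t$, $(X_1,\dots,X_t)\sim\prod_{k=1}^tD_k$. Correlation matrix $C_{ij}(k)=\mathbb{E}_{X\sim D_k}[\ell_i(X)\ell_j(X)]$; $\bm C^{[r]}(t)=\frac1r\sum_{k=t-r+1}^t\bm C(k)$; $\hat{\bm C}^{[r]}(t)=\frac1r\sum_{k=t-r+1}^t\bm v_k\bm v_k^T$ with $\bm v_k=(\ell_1(X_k),\dots,\ell_n(X_k))^T$. *)

theory Defs
  imports "HOL-Probability.Probability"
begin

text \<open>n x n matrices are represented as functions nat => nat => real, indices 1..n.\<close>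

definition maxnorm :: "nat \<Rightarrow> (nat \<Rightarrow> nat \<Rightarrow> real) \<Rightarrow> real" where
  "maxnorm n A = Max {\<bar>A i j\<bar> | i j. i \<in> {1..n} \<and> j \<in> {1..n}}"

definition corr :: "'a measure \<Rightarrow> (nat \<Rightarrow> 'b::topological_space \<Rightarrow> real) \<Rightarrow> (nat \<Rightarrow> 'a \<Rightarrow> 'b)
    \<Rightarrow> nat \<Rightarrow> nat \<Rightarrow> nat \<Rightarrow> real" where
  "corr M l X k i j = (\<integral>x. l i x * l j x \<partial>(distr M borel (X k)))"

definition avg_corr :: "'a measure \<Rightarrow> (nat \<Rightarrow> 'b::topological_space \<Rightarrow> real) \<Rightarrow> (nat \<Rightarrow> 'a \<Rightarrow> 'b)
    \<Rightarrow> nat \<Rightarrow> nat \<Rightarrow> nat \<Rightarrow> nat \<Rightarrow> real" where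
  "avg_corr M l X r t i j = (1 / real r) * (\<Sum>k\<in>{t - r + 1..t}. corr M l X k i j)"

definition emp_corr :: "(nat \<Rightarrow> 'b \<Rightarrow> real) \<Rightarrow> (nat \<Rightarrow> 'a \<Rightarrow> 'b)
    \<Rightarrow> nat \<Rightarrow> nat \<Rightarrow> 'a \<Rightarrow> nat \<Rightarrow> nat \<Rightarrow> real" where
  "emp_corr l X r t \<omega> i j = (1 / real r) * (\<Sum>k\<in>{t - r + 1..t}. l i (X k \<omega>) * l j (X k \<omega>))"

definition A_const :: "real \<Rightarrow> nat \<Rightarrow> nat \<Rightarrow> real" where
  "A_const \<delta> n m = sqrt (2 * ln ((2 * real m - 1) * real n * (real n - 1) / \<delta>))"

end

theory Submission
  imports Defs
begin

(* Each entry of an empirical window correlation matrix, and each entry of the difference of two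
   of them, is a weighted sum of the independent +-1 variables l_i(X_k) l_j(X_k): the weights are
   window_weight a t (value 1/a on the last a inputs), resp. window_weight a t - window_weight b t,
   whose squared Euclidean norm is 1/a, resp. 1/a - 1/b = (1 - a/b)/a.  Hoeffding's inequality
   bounds the probability of a deviation beyond A times this norm by 2 exp(-A^2/2).  The matrices
   are symmetric with deterministic unit diagonal, so a union bound over the n(n-1)/2 pairs i < j
   and the 2m - 1 windows and window differences costs (2m - 1) n (n - 1) exp(-A^2/2), which the
   choice A = A_const delta n m makes equal to delta.  Part (i) follows from the deviation bound
   by the triangle inequality for the max norm. *)

lemma maxnorm_le_iff:
  assumes "n \<ge> 1"
  shows "maxnorm n A \<le> c \<longleftrightarrow> (\<forall>i\<in>{1..n}. \<forall>j\<in>{1..n}. \<bar>A i j\<bar> \<le> c)"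
proof -
  have "{\<bar>A i j\<bar> | i j. i \<in> {1..n} \<and> j \<in> {1..n}} = (\<lambda>(i, j). \<bar>A i j\<bar>) ` ({1..n} \<times> {1..n})"
    by force
  then show ?thesis
    using assms unfolding maxnorm_def by (subst Max_le_iff) auto
qed

lemma abs_le_maxnorm:
  assumes "i \<in> {1..n}" "j \<in> {1..n}"
  shows "\<bar>A i j\<bar> \<le> maxnorm n A"
  using assms maxnorm_le_iff[of n A "maxnorm n A"] by auto

lemma maxnorm_diff_triangle:
  assumes "n \<ge> 1"
  shows "maxnorm n (\<lambda>i j. A i j - C i j)
           \<le> maxnorm n (\<lambda>i j. A i j - B i j) + maxnorm n (\<lambda>i j. B i j - C i j)"
  unfolding maxnorm_le_iff[OF assms]
  by (smt (verit) abs_le_maxnorm[where A = "\<lambda>i j. A i j - B i j"] abs_le_maxnorm[where A = "\<lambda>i j. B i j - C i j"])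

lemma borel_measurable_maxnorm:
  assumes "\<And>i j. i \<in> {1..n} \<Longrightarrow> j \<in> {1..n} \<Longrightarrow> f i j \<in> borel_measurable M"
  shows "(\<lambda>\<omega>. maxnorm n (\<lambda>i j. f i j \<omega>)) \<in> borel_measurable M"
proof -
  have "maxnorm n (\<lambda>i j. f i j \<omega>) = Max ((\<lambda>(i, j). \<bar>f i j \<omega>\<bar>) ` ({1..n} \<times> {1..n}))" for \<omega>
    unfolding maxnorm_def by (rule arg_cong[where f = Max]) force
  then show ?thesis
    using assms by (simp only:) (rule borel_measurable_Max; force)
qed

lemma card_strict_pairs:
  "2 * card {(i, j). 1 \<le> i \<and> i < j \<and> j \<le> n} = n * (n - 1)"
proof (induction n)
  case (Suc n)
  have "{(i, j). 1 \<le> i \<and> i < j \<and> j \<le> Suc n}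
      = {(i, j). 1 \<le> i \<and> i < j \<and> j \<le> n} \<union> (\<lambda>i. (i, Suc n)) ` {1..n}"
    by auto
  moreover have "finite {(i, j). 1 \<le> i \<and> i < j \<and> j \<le> n}"
    by (rule finite_subset[of _ "{1..n} \<times> {1..n}"]) auto
  ultimately have "card {(i, j). 1 \<le> i \<and> i < j \<and> j \<le> Suc n}
      = card {(i, j). 1 \<le> i \<and> i < j \<and> j \<le> n} + card ((\<lambda>i. (i, Suc n)) ` {1..n})"
    by (simp only:) (rule card_Un_disjoint; auto)
  also have "card ((\<lambda>i. (i, Suc n)) ` {1..n}) = n"
    by (simp add: card_image inj_on_def)
  finally show ?case
    using Suc by (cases n) auto
qed (auto simp: card_eq_0_iff)

lemma (in prob_space) Hoeffding_weighted_sum: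
  fixes Z :: "'i \<Rightarrow> 'a \<Rightarrow> real" and w :: "'i \<Rightarrow> real"
  assumes "finite I" and "indep_vars (\<lambda>_. borel) Z I"
    and "\<And>k x. k \<in> I \<Longrightarrow> x \<in> space M \<Longrightarrow> \<bar>Z k x\<bar> \<le> 1"
    and "(\<Sum>k\<in>I. (w k)\<^sup>2) > 0" and "A \<ge> 0"
  shows "prob {x \<in> space M. A * sqrt (\<Sum>k\<in>I. (w k)\<^sup>2)
                 \<le> \<bar>(\<Sum>k\<in>I. w k * Z k x) - (\<Sum>k\<in>I. w k * expectation (Z k))\<bar>}
           \<le> 2 * exp (- (A\<^sup>2 / 2))"
proof -
  have "indep_vars (\<lambda>_. borel) (\<lambda>k x. w k * Z k x) I"
    using assms(2) by (rule indep_vars_compose2) measurable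
  moreover have "AE x in M. w k * Z k x \<in> {- \<bar>w k\<bar>..\<bar>w k\<bar>}" if "k \<in> I" for k
  proof (rule AE_I2)
    fix x assume "x \<in> space M"
    then have "\<bar>w k * Z k x\<bar> \<le> \<bar>w k\<bar>"
      using assms(3)[OF that] by (simp add: abs_mult mult_left_le)
    then show "w k * Z k x \<in> {- \<bar>w k\<bar>..\<bar>w k\<bar>}"
      by (auto simp: abs_le_iff)
  qed
  ultimately interpret Hoeffding_ineq M I "\<lambda>k x. w k * Z k x" "\<lambda>k. - \<bar>w k\<bar>" "\<lambda>k. \<bar>w k\<bar>"
      "\<Sum>k\<in>I. w k * expectation (Z k)"
    using assms(1) by unfold_locales auto
  have "(\<Sum>k\<in>I. (\<bar>w k\<bar> - - \<bar>w k\<bar>)\<^sup>2) = 4 * (\<Sum>k\<in>I. (w k)\<^sup>2)"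
    by (simp add: sum_distrib_left power2_eq_square)
  then show ?thesis
    using Hoeffding_ineq_abs_ge[of "A * sqrt (\<Sum>k\<in>I. (w k)\<^sup>2)"] assms(4,5)
    by (simp add: power_mult_distrib)
qed

lemma (in prob_space) prob_ge_one_minus_union_bound:
  assumes "S \<in> events" and "finite K" and "\<And>k. k \<in> K \<Longrightarrow> B k \<in> events"
    and "space M - S \<subseteq> (\<Union>k\<in>K. B k)"
  shows "prob S \<ge> 1 - (\<Sum>k\<in>K. prob (B k))"
proof -
  have "1 - prob S = prob (space M - S)"
    using prob_compl[OF assms(1)] by simp
  also have "\<dots> \<le> prob (\<Union>k\<in>K. B k)"
    using assms(2-4) by (intro finite_measure_mono) auto
  also have "\<dots> \<le> (\<Sum>k\<in>K. prob (B k))"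
    using assms(2,3) by (intro finite_measure_subadditive_finite) auto
  finally show ?thesis by simp
qed

lemma (in prob_space) prob_maxnorm_gt_le:
  fixes D :: "nat \<Rightarrow> nat \<Rightarrow> 'a \<Rightarrow> real"
  assumes "n \<ge> 1" and "e \<ge> 0"
    and "\<And>i j. i \<in> {1..n} \<Longrightarrow> j \<in> {1..n} \<Longrightarrow> D i j \<in> borel_measurable M"
    and "\<And>i j \<omega>. D i j \<omega> = D j i \<omega>" and "\<And>i \<omega>. i \<in> {1..n} \<Longrightarrow> D i i \<omega> = 0"
    and "\<And>i j. 1 \<le> i \<Longrightarrow> i < j \<Longrightarrow> j \<le> n \<Longrightarrow> prob {\<omega> \<in> space M. e \<le> \<bar>D i j \<omega>\<bar>} \<le> p"
  shows "prob {\<omega> \<in> space M. e < maxnorm n (\<lambda>i j. D i j \<omega>)} \<le> real n * (real n - 1) / 2 * p"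
proof -
  define P where "P = {(i, j). 1 \<le> i \<and> i < j \<and> j \<le> n}"
  define B where "B = (\<lambda>(i, j). {\<omega> \<in> space M. e \<le> \<bar>D i j \<omega>\<bar>})"
  have "finite P"
    unfolding P_def by (rule finite_subset[of _ "{1..n} \<times> {1..n}"]) auto
  have B_events: "B ij \<in> events" if "ij \<in> P" for ij
    using that assms(3) unfolding P_def B_def by (auto split: prod.splits)
  have "{\<omega> \<in> space M. e < maxnorm n (\<lambda>i j. D i j \<omega>)} \<subseteq> (\<Union>ij\<in>P. B ij)"
  proof
    fix \<omega> assume "\<omega> \<in> {\<omega> \<in> space M. e < maxnorm n (\<lambda>i j. D i j \<omega>)}"
    then obtain i j where "i \<in> {1..n}" "j \<in> {1..n}" "e < \<bar>D i j \<omega>\<bar>" "\<omega> \<in> space M"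
      using maxnorm_le_iff[OF assms(1), of "\<lambda>i j. D i j \<omega>" e] by (auto simp: not_le)
    moreover have "i \<noteq> j"
      using calculation assms(2,5) by auto
    ultimately show "\<omega> \<in> (\<Union>ij\<in>P. B ij)"
      unfolding P_def B_def using assms(4)[of i j \<omega>]
      by (cases i j rule: linorder_cases) force+
  qed
  then have "prob {\<omega> \<in> space M. e < maxnorm n (\<lambda>i j. D i j \<omega>)} \<le> prob (\<Union>ij\<in>P. B ij)"
    using \<open>finite P\<close> B_events by (intro finite_measure_mono) auto
  also have "\<dots> \<le> (\<Sum>ij\<in>P. prob (B ij))"
    using \<open>finite P\<close> B_events by (intro finite_measure_subadditive_finite) auto
  also have "\<dots> \<le> real (card P) * p"
    using assms(6) unfolding P_def B_def by (intro sum_bounded_above) auto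
  also have "real (card P) = real n * (real n - 1) / 2"
  proof -
    have "real (2 * card P) = real (n * (n - 1))"
      unfolding P_def card_strict_pairs ..
    then show ?thesis
      using assms(1) by simp
  qed
  finally show ?thesis .
qed

definition window_weight :: "nat \<Rightarrow> nat \<Rightarrow> nat \<Rightarrow> real" where
  "window_weight a t k = (if k \<in> {t - a + 1..t} then 1 / real a else 0)"

lemma window_average_eq_weighted_sum:
  assumes "a \<le> b"
  shows "1 / real a * (\<Sum>k\<in>{t - a + 1..t}. f k) = (\<Sum>k\<in>{t - b + 1..t}. window_weight a t k * f k)"
proof -
  have "(\<Sum>k\<in>{t - b + 1..t}. window_weight a t k * f k)
      = (\<Sum>k\<in>{t - b + 1..t}. if k \<in> {t - a + 1..t} then f k / real a else 0)"
    unfolding window_weight_def by (intro sum.cong) auto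
  also have "\<dots> = (\<Sum>k\<in>{t - b + 1..t} \<inter> {t - a + 1..t}. f k / real a)"
    by (simp only: sum.inter_restrict finite_atLeastAtMost)
  also have "{t - b + 1..t} \<inter> {t - a + 1..t} = {t - a + 1..t}"
    using assms by auto
  finally show ?thesis
    by (simp add: sum_divide_distrib)
qed

lemma sum_window_weight_mult:
  assumes "1 \<le> a" "a \<le> b" "a \<le> c" "a \<le> t"
  shows "(\<Sum>k\<in>{t - b + 1..t}. window_weight a t k * window_weight c t k) = 1 / real c"
proof -
  have "(\<Sum>k\<in>{t - b + 1..t}. window_weight a t k * window_weight c t k)
      = 1 / real a * (\<Sum>k\<in>{t - a + 1..t}. window_weight c t k)"
    using assms(2) by (rule window_average_eq_weighted_sum[symmetric])
  also have "(\<Sum>k\<in>{t - a + 1..t}. window_weight c t k) = (\<Sum>k\<in>{t - a + 1..t}. 1 / real c)"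
    using assms unfolding window_weight_def by (intro sum.cong) auto
  also have "\<dots> = real a / real c"
    using assms(4) by simp
  finally show ?thesis
    using assms(1) by simp
qed

lemma emp_corr_sym: "emp_corr l X a t \<omega> i j = emp_corr l X a t \<omega> j i"
  unfolding emp_corr_def by (simp add: mult.commute)

lemma avg_corr_sym: "avg_corr M l X a t i j = avg_corr M l X a t j i"
  unfolding avg_corr_def corr_def by (simp add: mult.commute)

locale sign_labelled_inputs = prob_space M for M :: "'a measure" +
  fixes X :: "nat \<Rightarrow> 'a \<Rightarrow> 'b::topological_space" and l :: "nat \<Rightarrow> 'b \<Rightarrow> real" and n :: nat
  assumes random_variable_X [measurable]: "\<And>k. X k \<in> borel_measurable M"
    and indep_X: "indep_vars (\<lambda>_. borel) X {1..}"
    and measurable_label: "\<And>i. i \<in> {1..n} \<Longrightarrow> l i \<in> borel_measurable borel"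
    and label_sign: "\<And>i x. i \<in> {1..n} \<Longrightarrow> l i x \<in> {-1, 1}"
begin

lemma abs_label_mult: "i \<in> {1..n} \<Longrightarrow> j \<in> {1..n} \<Longrightarrow> \<bar>l i x * l j x\<bar> = 1"
  using label_sign[of i x] label_sign[of j x] by (auto simp: abs_mult)

lemma label_mult_self: "i \<in> {1..n} \<Longrightarrow> l i x * l i x = 1"
  using label_sign[of i x] by auto

lemma borel_measurable_label_mult:
  assumes "i \<in> {1..n}" "j \<in> {1..n}"
  shows "(\<lambda>x. l i x * l j x) \<in> borel_measurable borel"
proof -
  note [measurable] = measurable_label[OF assms(1)] measurable_label[OF assms(2)]
  show ?thesis by measurable
qed

lemma corr_eq_expectation:
  assumes "i \<in> {1..n}" "j \<in> {1..n}"
  shows "corr M l X k i j = expectation (\<lambda>\<omega>. l i (X k \<omega>) * l j (X k \<omega>))"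
  unfolding corr_def by (rule integral_distr[OF random_variable_X borel_measurable_label_mult[OF assms]])

lemma avg_corr_diag:
  assumes "i \<in> {1..n}" "1 \<le> a" "a \<le> t"
  shows "avg_corr M l X a t i i = 1"
  using assms by (simp add: avg_corr_def corr_eq_expectation label_mult_self prob_space)

lemma emp_corr_diag:
  assumes "i \<in> {1..n}" "1 \<le> a" "a \<le> t"
  shows "emp_corr l X a t \<omega> i i = 1"
  using assms by (simp add: emp_corr_def label_mult_self)

lemma borel_measurable_emp_corr:
  "i \<in> {1..n} \<Longrightarrow> j \<in> {1..n} \<Longrightarrow> (\<lambda>\<omega>. emp_corr l X a t \<omega> i j) \<in> borel_measurable M"
  unfolding emp_corr_def
  using measurable_compose[OF random_variable_X borel_measurable_label_mult] by measurable

lemma prob_weighted_corr_deviation: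
  assumes "i \<in> {1..n}" "j \<in> {1..n}" and "finite I" "I \<subseteq> {1..}"
    and "(\<Sum>k\<in>I. (w k)\<^sup>2) > 0" and "A \<ge> 0"
  shows "prob {\<omega> \<in> space M. A * sqrt (\<Sum>k\<in>I. (w k)\<^sup>2)
              \<le> \<bar>(\<Sum>k\<in>I. w k * (l i (X k \<omega>) * l j (X k \<omega>))) - (\<Sum>k\<in>I. w k * corr M l X k i j)\<bar>}
           \<le> 2 * exp (- (A\<^sup>2 / 2))"
proof -
  have "indep_vars (\<lambda>_. borel) (\<lambda>k \<omega>. l i (X k \<omega>) * l j (X k \<omega>)) I"
    using indep_vars_subset[OF indep_X assms(4)] borel_measurable_label_mult[OF assms(1,2)]
    by (rule indep_vars_compose2)
  from Hoeffding_weighted_sum[OF assms(3) this _ assms(5,6)] show ?thesis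
    using assms(1,2) by (simp add: abs_label_mult corr_eq_expectation)
qed

lemma prob_emp_corr_deviation:
  assumes "i \<in> {1..n}" "j \<in> {1..n}" and "1 \<le> a" "a \<le> t" and "A \<ge> 0"
  shows "prob {\<omega> \<in> space M. A / sqrt (real a)
              \<le> \<bar>avg_corr M l X a t i j - emp_corr l X a t \<omega> i j\<bar>}
           \<le> 2 * exp (- (A\<^sup>2 / 2))"
proof -
  let ?W = "{t - a + 1..t}"
  have sum_sq: "(\<Sum>k\<in>?W. (window_weight a t k)\<^sup>2) = 1 / real a"
    using sum_window_weight_mult[of a a a t] assms(3,4) by (simp add: power2_eq_square)
  have "emp_corr l X a t \<omega> i j = (\<Sum>k\<in>?W. window_weight a t k * (l i (X k \<omega>) * l j (X k \<omega>)))" for \<omega>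
    unfolding emp_corr_def by (rule window_average_eq_weighted_sum) simp
  moreover have "avg_corr M l X a t i j = (\<Sum>k\<in>?W. window_weight a t k * corr M l X k i j)"
    unfolding avg_corr_def by (rule window_average_eq_weighted_sum) simp
  ultimately show ?thesis
    using prob_weighted_corr_deviation[OF assms(1,2), of ?W "window_weight a t" A] sum_sq assms(3,5)
    by (simp add: abs_minus_commute real_sqrt_divide)
qed

lemma prob_emp_corr_increment_deviation:
  assumes "i \<in> {1..n}" "j \<in> {1..n}" and "1 \<le> a" "a < b" "b \<le> t" and "A \<ge> 0"
  shows "prob {\<omega> \<in> space M. A * sqrt ((1 - real a / real b) / real a)
              \<le> \<bar>avg_corr M l X a t i j - avg_corr M l X b t i j
                  - emp_corr l X a t \<omega> i j + emp_corr l X b t \<omega> i j\<bar>}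
           \<le> 2 * exp (- (A\<^sup>2 / 2))"
proof -
  let ?W = "{t - b + 1..t}"
  define w where "w k = window_weight a t k - window_weight b t k" for k
  have "(\<Sum>k\<in>?W. (w k)\<^sup>2)
      = (\<Sum>k\<in>?W. window_weight a t k * window_weight a t k)
        - 2 * (\<Sum>k\<in>?W. window_weight a t k * window_weight b t k)
        + (\<Sum>k\<in>?W. window_weight b t k * window_weight b t k)"
    unfolding w_def power2_eq_square
    by (simp add: algebra_simps sum.distrib sum_subtractf sum_distrib_left)
  also have "\<dots> = 1 / real a - 1 / real b"
    using sum_window_weight_mult[of a b a t] sum_window_weight_mult[of a b b t]
      sum_window_weight_mult[of b b b t] assms(3-5) by simp
  also have "\<dots> = (1 - real a / real b) / real a"
    using assms(3) by (simp add: field_simps)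
  finally have sum_sq: "(\<Sum>k\<in>?W. (w k)\<^sup>2) = (1 - real a / real b) / real a" .
  have sum_sq_pos: "(1 - real a / real b) / real a > 0"
    using assms(3,4) by (simp add: field_simps)
  have "emp_corr l X a t \<omega> i j - emp_corr l X b t \<omega> i j
      = (\<Sum>k\<in>?W. w k * (l i (X k \<omega>) * l j (X k \<omega>)))" for \<omega>
    unfolding emp_corr_def w_def left_diff_distrib sum_subtractf
    using window_average_eq_weighted_sum[of a b] window_average_eq_weighted_sum[of b b] assms(4)
    by simp
  moreover have "avg_corr M l X a t i j - avg_corr M l X b t i j = (\<Sum>k\<in>?W. w k * corr M l X k i j)"
    unfolding avg_corr_def w_def left_diff_distrib sum_subtractf
    using window_average_eq_weighted_sum[of a b] window_average_eq_weighted_sum[of b b] assms(4)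
    by simp
  ultimately show ?thesis
    using prob_weighted_corr_deviation[OF assms(1,2), of ?W w A] sum_sq sum_sq_pos assms(6)
    by (simp add: abs_minus_commute algebra_simps)
qed

lemma prob_maxnorm_emp_corr_deviation:
  assumes "n \<ge> 1" and "1 \<le> a" "a \<le> t" and "A \<ge> 0"
  shows "prob {\<omega> \<in> space M. A / sqrt (real a)
              < maxnorm n (\<lambda>i j. avg_corr M l X a t i j - emp_corr l X a t \<omega> i j)}
           \<le> real n * (real n - 1) * exp (- (A\<^sup>2 / 2))"
proof -
  have "prob {\<omega> \<in> space M. A / sqrt (real a)
              < maxnorm n (\<lambda>i j. avg_corr M l X a t i j - emp_corr l X a t \<omega> i j)}
        \<le> real n * (real n - 1) / 2 * (2 * exp (- (A\<^sup>2 / 2)))"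
  proof (rule prob_maxnorm_gt_le)
    show "(\<lambda>\<omega>. avg_corr M l X a t i j - emp_corr l X a t \<omega> i j) \<in> borel_measurable M"
      if "i \<in> {1..n}" "j \<in> {1..n}" for i j
      using borel_measurable_emp_corr[OF that] by measurable
  qed (use assms in \<open>auto simp: avg_corr_sym emp_corr_sym avg_corr_diag emp_corr_diag
      intro: prob_emp_corr_deviation\<close>)
  then show ?thesis by simp
qed

lemma prob_maxnorm_emp_corr_increment_deviation:
  assumes "n \<ge> 1" and "1 \<le> a" "a < b" "b \<le> t" and "A \<ge> 0"
  shows "prob {\<omega> \<in> space M. A * sqrt ((1 - real a / real b) / real a)
              < maxnorm n (\<lambda>i j. avg_corr M l X a t i j - avg_corr M l X b t i j
                                - emp_corr l X a t \<omega> i j + emp_corr l X b t \<omega> i j)}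
           \<le> real n * (real n - 1) * exp (- (A\<^sup>2 / 2))"
proof -
  have "(1 - real a / real b) / real a \<ge> 0"
    using assms(2,3) by (simp add: field_simps)
  then have "prob {\<omega> \<in> space M. A * sqrt ((1 - real a / real b) / real a)
              < maxnorm n (\<lambda>i j. avg_corr M l X a t i j - avg_corr M l X b t i j
                                - emp_corr l X a t \<omega> i j + emp_corr l X b t \<omega> i j)}
        \<le> real n * (real n - 1) / 2 * (2 * exp (- (A\<^sup>2 / 2)))"
  proof (intro prob_maxnorm_gt_le)
    show "(\<lambda>\<omega>. avg_corr M l X a t i j - avg_corr M l X b t i j
                - emp_corr l X a t \<omega> i j + emp_corr l X b t \<omega> i j) \<in> borel_measurable M"
      if "i \<in> {1..n}" "j \<in> {1..n}" for i j
      using borel_measurable_emp_corr[OF that] by measurable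
  qed (use assms in \<open>auto simp: avg_corr_sym emp_corr_sym avg_corr_diag emp_corr_diag
      intro: prob_emp_corr_increment_deviation\<close>)
  then show ?thesis by simp
qed

lemma prob_window_deviations_ge:
  fixes r :: "nat \<Rightarrow> nat"
  assumes "n \<ge> 1" and "A \<ge> 0" and "m \<ge> 1"
    and "\<And>k. k \<in> {1..m} \<Longrightarrow> r k \<ge> 1" and "\<And>k. k \<in> {1..<m} \<Longrightarrow> r k < r (Suc k)"
    and "r m \<le> t"
  shows "prob {\<omega> \<in> space M.
      (\<forall>k\<in>{1..m}.
         maxnorm n (\<lambda>i j. corr M l X t i j - emp_corr l X (r k) t \<omega> i j)
           \<le> A / sqrt (real (r k)) + maxnorm n (\<lambda>i j. corr M l X t i j - avg_corr M l X (r k) t i j)) \<and>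
      (\<forall>k\<in>{1..<m}.
         maxnorm n (\<lambda>i j. avg_corr M l X (r k) t i j - avg_corr M l X (r (Suc k)) t i j
                         - emp_corr l X (r k) t \<omega> i j + emp_corr l X (r (Suc k)) t \<omega> i j)
           \<le> A * sqrt ((1 - real (r k) / real (r (Suc k))) / real (r k)))}
    \<ge> 1 - (2 * real m - 1) * (real n * (real n - 1) * exp (- (A\<^sup>2 / 2)))"
    (is "prob ?S \<ge> 1 - _ * ?p")
proof -
  have r_le_t: "r k \<le> t" if "k \<in> {1..m}" for k
  proof -
    have "r k \<le> r j" if "k \<le> j" "j \<le> m" for j
      using that
    proof (induction j rule: dec_induct)
      case (step j)
      then show ?case
        using assms(5)[of j] \<open>k \<in> {1..m}\<close> by fastforce
    qed simp
    then show ?thesis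
      using that assms(6) by fastforce
  qed
  define dev1 where "dev1 k = {\<omega> \<in> space M. A / sqrt (real (r k))
      < maxnorm n (\<lambda>i j. avg_corr M l X (r k) t i j - emp_corr l X (r k) t \<omega> i j)}" for k
  define dev2 where "dev2 k = {\<omega> \<in> space M. A * sqrt ((1 - real (r k) / real (r (Suc k))) / real (r k))
      < maxnorm n (\<lambda>i j. avg_corr M l X (r k) t i j - avg_corr M l X (r (Suc k)) t i j
                         - emp_corr l X (r k) t \<omega> i j + emp_corr l X (r (Suc k)) t \<omega> i j)}" for k
  define K where "K = {1..m} <+> {1..<m}"
  have [measurable]:
    "(\<lambda>\<omega>. maxnorm n (\<lambda>i j. c i j - emp_corr l X a t \<omega> i j)) \<in> borel_measurable M"
    "(\<lambda>\<omega>. maxnorm n (\<lambda>i j. c i j - emp_corr l X a t \<omega> i j + emp_corr l X b t \<omega> i j))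
       \<in> borel_measurable M" for c a b
    by (intro borel_measurable_maxnorm borel_measurable_add borel_measurable_diff
        borel_measurable_const borel_measurable_emp_corr; assumption)+
  have "space M - ?S \<subseteq> (\<Union>k\<in>K. case_sum dev1 dev2 k)"
  proof
    fix \<omega> assume \<omega>: "\<omega> \<in> space M - ?S"
    have "maxnorm n (\<lambda>i j. corr M l X t i j - emp_corr l X (r k) t \<omega> i j)
           \<le> A / sqrt (real (r k)) + maxnorm n (\<lambda>i j. corr M l X t i j - avg_corr M l X (r k) t i j)"
      if "\<omega> \<notin> dev1 k" for k
    proof -
      have "maxnorm n (\<lambda>i j. avg_corr M l X (r k) t i j - emp_corr l X (r k) t \<omega> i j)
          \<le> A / sqrt (real (r k))"
        using that \<omega> unfolding dev1_def by auto
      then show ?thesis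
        using maxnorm_diff_triangle[OF assms(1), where A = "corr M l X t"
            and B = "avg_corr M l X (r k) t" and C = "\<lambda>i j. emp_corr l X (r k) t \<omega> i j"]
        by linarith
    qed
    with \<omega> show "\<omega> \<in> (\<Union>k\<in>K. case_sum dev1 dev2 k)"
      unfolding K_def dev2_def by force
  qed
  then have "prob ?S \<ge> 1 - (\<Sum>k\<in>K. prob (case_sum dev1 dev2 k))"
    by (intro prob_ge_one_minus_union_bound) (auto simp: K_def dev1_def dev2_def)
  moreover have "(\<Sum>k\<in>K. prob (case_sum dev1 dev2 k)) \<le> real (card K) * ?p"
  proof (intro sum_bounded_above)
    fix k assume "k \<in> K"
    then show "prob (case_sum dev1 dev2 k) \<le> ?p"
      unfolding K_def dev1_def dev2_def using assms r_le_t
      by (auto intro!: prob_maxnorm_emp_corr_deviation prob_maxnorm_emp_corr_increment_deviation)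
  qed
  moreover have "real (card K) = 2 * real m - 1"
    using assms(3) by (simp add: K_def card_Plus)
  ultimately show ?thesis by simp
qed

end

lemma
  assumes "0 < \<delta>" and "\<delta> \<le> (2 * real m - 1) * real n * (real n - 1)"
  shows A_const_nonneg: "A_const \<delta> n m \<ge> 0"
    and union_bound_A_const_eq:
      "(2 * real m - 1) * (real n * (real n - 1) * exp (- ((A_const \<delta> n m)\<^sup>2 / 2))) = \<delta>"
proof -
  define Q where "Q = (2 * real m - 1) * real n * (real n - 1) / \<delta>"
  have "Q \<ge> 1"
    using assms by (simp add: Q_def)
  then have A_sq: "(A_const \<delta> n m)\<^sup>2 = 2 * ln Q"
    by (simp add: A_const_def Q_def)
  show "A_const \<delta> n m \<ge> 0"
    using \<open>Q \<ge> 1\<close> by (simp add: A_const_def Q_def)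
  have "exp (- ((A_const \<delta> n m)\<^sup>2 / 2)) = \<delta> / ((2 * real m - 1) * real n * (real n - 1))"
    using \<open>Q \<ge> 1\<close> unfolding A_sq by (simp add: exp_minus exp_ln Q_def)
  then show "(2 * real m - 1) * (real n * (real n - 1) * exp (- ((A_const \<delta> n m)\<^sup>2 / 2))) = \<delta>"
    using \<open>Q \<ge> 1\<close> assms(1) by (auto simp: Q_def field_simps)
qed

theorem corollary1:
  fixes M :: "'a measure" and X :: "nat \<Rightarrow> 'a \<Rightarrow> real ^ 'd"
    and l :: "nat \<Rightarrow> real ^ 'd \<Rightarrow> real"
    and n m t :: nat and r :: "nat \<Rightarrow> nat" and \<delta> :: real
  assumes "prob_space M"
    and "\<And>k. X k \<in> borel_measurable M"
    and A1: "prob_space.indep_vars M (\<lambda>_. borel) X {1..}"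
    and "\<And>i. i \<in> {1..n} \<Longrightarrow> l i \<in> borel_measurable borel"
    and "\<And>i x. i \<in> {1..n} \<Longrightarrow> l i x \<in> {-1, 1}"
    and "n \<ge> 2" and "\<delta> > 0" and "m \<ge> 1"
    and "\<And>k. k \<in> {1..m} \<Longrightarrow> r k \<ge> 1"
    and "\<And>k. k \<in> {1..<m} \<Longrightarrow> r k < r (Suc k)"
    and "r m \<le> t"
  shows "measure M {\<omega> \<in> space M.
      (\<forall>k\<in>{1..m}.
         maxnorm n (\<lambda>i j. corr M l X t i j - emp_corr l X (r k) t \<omega> i j)
           \<le> A_const \<delta> n m / sqrt (real (r k))
              + maxnorm n (\<lambda>i j. corr M l X t i j - avg_corr M l X (r k) t i j)) \<and>
      (\<forall>k\<in>{1..<m}.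
         maxnorm n (\<lambda>i j. avg_corr M l X (r k) t i j - avg_corr M l X (r (Suc k)) t i j
                         - emp_corr l X (r k) t \<omega> i j + emp_corr l X (r (Suc k)) t \<omega> i j)
           \<le> A_const \<delta> n m * sqrt ((1 - real (r k) / real (r (Suc k))) / real (r k)))}
    \<ge> 1 - \<delta>"
proof -
  interpret sign_labelled_inputs M X l n
    by (intro sign_labelled_inputs.intro sign_labelled_inputs_axioms.intro assms(1)) (use assms in auto)
  show ?thesis
  proof (cases "\<delta> < 1")
    case False
    then show ?thesis
      by (intro order_trans[OF _ measure_nonneg]) simp
  next
    case True
    \<comment> \<open>Then the argument of the logarithm in A_const is at least 1, so A_const is a genuine square root.\<close>
    have "1 \<le> 2 * real m - 1" "1 \<le> real n * (real n - 1)"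
      using assms(6,8) mult_mono[of 1 "real n" 1 "real n - 1"] by auto
    then have "1 \<le> (2 * real m - 1) * (real n * (real n - 1))"
      using mult_mono[of 1 "2 * real m - 1" 1 "real n * (real n - 1)"] by simp
    with True have \<delta>_le: "\<delta> \<le> (2 * real m - 1) * real n * (real n - 1)"
      by (simp add: mult.assoc)
    have "n \<ge> 1"
      using assms(6) by simp
    from prob_window_deviations_ge[OF this A_const_nonneg[OF assms(7) \<delta>_le] assms(8-11)]
    show ?thesis
      unfolding union_bound_A_const_eq[OF assms(7) \<delta>_le] .
  qed
qed

end
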